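(* Let $l\in\mathbb{Z}_{\geq 2}\cup\{\infty\}$, let $k\geq 0$ be an integer and $m\in\mathbb{Z}_{\geq1}\cup\{\infty\}$ with $2k<m$. Then the connected components containing the identity of the subsets $\{(n,f) : |n|<k/2\}$ of the Cayley graphs of the marked groups $\Gamma(k,l,m)$ and $\Gamma(0,2,\infty)$ coincide (i.e. are isomorphic as labelled graphs by an isomorphism preserving the identity and the generator labels). In particular, the marked balls of radius $\frac{k-1}{2}$ in these two marked groups coincide.
   Context: For $l\in\mathbb{Z}_{\geq1}\cup\{\infty\}$, $D_l=\langle a,b\mid a^2=b^2=(ab)^l=1\rangle$ is the dihedral group of order $2l$. For groups $B,L$, the wreath product $B\wr L=B\ltimes\bigoplus_B L$ has elements $(g,f)$ with $g\in B$ and $f:B\to L$ finitely supported, $B$ acting by shift; $\mathbb{1}$ is the identically trivial function and $c\,\delta_g$ the function equal to $c$ at $g$ and trivial elsewhere. For integers $k\geq0$ and $l,m\in\mathbb{Z}_{\geq1}\cup\{\infty\}$ (with $\mathbb{Z}/\infty\mathbb{Z}=\mathbb{Z}$), $\Gamma(k,l,m)$ denotes the group $\mathbb{Z}/m\mathbb{Z}\wr D_l$ marked by the ordered generating set $\tau=(+1,\mathbb{1})$, $\alpha=(0,a\delta_0)$, $\beta=(0,b\delta_k)$. The Cayley graphs are taken with respect to these marked generators. Marked balls of radius $R$ in two marked groups coincide if for every word $w$ of length at most $2R$ in the free group on three letters, $w$ evaluates to the identity in one group iff it does in the other. *)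

theory Defs
  imports Main "HOL-Library.Extended_Nat"
begin

text \<open>An element m of Z_{>=1} \<union> {\<infinity>} is an enat; Z/mZ is modelled by the integers
  reduced modulo emod m, where emod \<infinity> = 0 (and x mod 0 = x, so Z/\<infinity>Z = Z).\<close>

definition emod :: "enat \<Rightarrow> int" where
  "emod m = (case m of enat n \<Rightarrow> int n | \<infinity> \<Rightarrow> 0)"

definition zabs :: "int \<Rightarrow> int \<Rightarrow> int" where
  "zabs M n = (if M = 0 then \<bar>n\<bar> else min (n mod M) (M - n mod M))"

text \<open>(r, s) stands for rho^r sigma^s with sigma rho sigma = rho^-1, r taken mod L = emod l.
  Generators a = sigma, b = rho sigma; then a^2 = b^2 = 1 and ab = rho^-1 has order l.\<close>

type_synonym dih = "int \<times> bool"

definition dih_one :: dih where "dih_one = (0, False)"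

definition dih_mul :: "int \<Rightarrow> dih \<Rightarrow> dih \<Rightarrow> dih" where
  "dih_mul L x y = ((fst x + (if snd x then - fst y else fst y)) mod L, snd x \<noteq> snd y)"

definition dih_inv :: "int \<Rightarrow> dih \<Rightarrow> dih" where
  "dih_inv L x = (if snd x then (fst x mod L, True) else ((- fst x) mod L, False))"

definition dih_a :: dih where "dih_a = (0, True)"

definition dih_b :: "int \<Rightarrow> dih" where "dih_b L = (1 mod L, True)"

type_synonym lamp = "int \<times> (int \<Rightarrow> dih)"

definition wr_carrier :: "int \<Rightarrow> int \<Rightarrow> lamp set" where
  "wr_carrier M L = {u. fst u mod M = fst u
      \<and> (\<forall>x. fst (snd u x) mod L = fst (snd u x))
      \<and> (\<forall>x. x mod M \<noteq> x \<longrightarrow> snd u x = dih_one)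
      \<and> finite {x. snd u x \<noteq> dih_one}}"

definition wr_one :: lamp where "wr_one = (0, \<lambda>x. dih_one)"

definition wr_mul :: "int \<Rightarrow> int \<Rightarrow> lamp \<Rightarrow> lamp \<Rightarrow> lamp" where
  "wr_mul M L u v = ((fst u + fst v) mod M,
      \<lambda>x. if x mod M = x then dih_mul L (snd u x) (snd v ((x - fst u) mod M)) else dih_one)"

definition wr_inv :: "int \<Rightarrow> int \<Rightarrow> lamp \<Rightarrow> lamp" where
  "wr_inv M L u = ((- fst u) mod M,
      \<lambda>x. if x mod M = x then dih_inv L (snd u ((x + fst u) mod M)) else dih_one)"

datatype gen = Tau | Alpha | Beta

definition Gamma_carrier :: "enat \<Rightarrow> enat \<Rightarrow> lamp set" where
  "Gamma_carrier l m = wr_carrier (emod m) (emod l)"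

definition Gamma_mul :: "enat \<Rightarrow> enat \<Rightarrow> lamp \<Rightarrow> lamp \<Rightarrow> lamp" where
  "Gamma_mul l m = wr_mul (emod m) (emod l)"

definition Gamma_inv :: "enat \<Rightarrow> enat \<Rightarrow> lamp \<Rightarrow> lamp" where
  "Gamma_inv l m = wr_inv (emod m) (emod l)"

definition Gamma_gen :: "nat \<Rightarrow> enat \<Rightarrow> enat \<Rightarrow> gen \<Rightarrow> lamp" where
  "Gamma_gen k l m s = (case s of
      Tau \<Rightarrow> (1 mod emod m, \<lambda>x. dih_one)
    | Alpha \<Rightarrow> (0, (\<lambda>x. dih_one)(0 := dih_a))
    | Beta \<Rightarrow> (0, (\<lambda>x. dih_one)(int k mod emod m := dih_b (emod l))))"

text \<open>Words in the free group on tau, alpha, beta: letters (s, True) mean s^-1.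
  Evaluation multiplies left to right.\<close>
definition Gamma_word :: "nat \<Rightarrow> enat \<Rightarrow> enat \<Rightarrow> (gen \<times> bool) list \<Rightarrow> lamp" where
  "Gamma_word k l m w = foldl (\<lambda>g x. Gamma_mul l m g
      (if snd x then Gamma_inv l m (Gamma_gen k l m (fst x)) else Gamma_gen k l m (fst x))) wr_one w"

definition band :: "nat \<Rightarrow> enat \<Rightarrow> enat \<Rightarrow> lamp set" where
  "band K l m = {u \<in> Gamma_carrier l m. 2 * zabs (emod m) (fst u) < int K}"

definition band_adj :: "nat \<Rightarrow> nat \<Rightarrow> enat \<Rightarrow> enat \<Rightarrow> (lamp \<times> lamp) set" where
  "band_adj K k l m = {(g, h). g \<in> band K l m \<and> h \<in> band K l m \<and>
      (\<exists>s. h = Gamma_mul l m g (Gamma_gen k l m s) \<or> g = Gamma_mul l m h (Gamma_gen k l m s))}"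

definition ident_comp :: "nat \<Rightarrow> nat \<Rightarrow> enat \<Rightarrow> enat \<Rightarrow> lamp set" where
  "ident_comp K k l m = {h \<in> band K l m. (wr_one, h) \<in> (band_adj K k l m)\<^sup>*}"

end

theory Submission
  imports Defs
begin

text \<open>An element of the identity component of the band \<open>|n| < K/2\<close> is determined by the cursor
  position \<open>n\<close> and by the two sets of window positions \<open>j\<close> (\<open>2|j| < K\<close>) at which an \<open>\<alpha>\<close>-lamp,
  sitting at \<open>j\<close>, resp. a \<open>\<beta>\<close>-lamp, sitting at \<open>j + k\<close>, is lit. Since \<open>2k < m\<close>, the sites
  \<open>j\<close> and \<open>j + k\<close> of window positions are pairwise distinct modulo \<open>m\<close>, so inside the band
  the generators act exactly as in \<open>\<Gamma>(0,2,\<infinity>)\<close>, where both lamps sit at the same site but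
  commute. Both components are therefore isomorphic to one model graph on triples \<open>(n, A, B)\<close>
  that depends only on \<open>K\<close>. A word of length \<open>< k\<close> that is trivial in either group has
  \<open>\<tau>\<close>-exponent sum zero, so its path never leaves the band and is traced in that model graph.\<close>

lemma wr_carrierD:
  assumes "u \<in> wr_carrier M L"
  shows "fst u mod M = fst u" "fst (snd u x) mod L = fst (snd u x)"
    "x mod M \<noteq> x \<Longrightarrow> snd u x = dih_one"
  using assms by (auto simp: wr_carrier_def)

lemma dih_mul_one_right: "fst y mod L = fst y \<Longrightarrow> dih_mul L y dih_one = y"
  by (cases y) (simp add: dih_mul_def dih_one_def)

lemma dih_mul_cancel_right:
  assumes "fst y mod L = fst y" "fst y' mod L = fst y'" "dih_mul L y c = dih_mul L y' c"
  shows "y = y'"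
proof -
  have snd: "snd y = snd y'" using assms(3) by (auto simp: dih_mul_def)
  then have "fst y mod L = fst y' mod L"
    using assms(3) by (auto simp: dih_mul_def mod_eq_dvd_iff)
  then have "fst y = fst y'" using assms(1,2) by simp
  then show ?thesis using snd by (simp add: prod_eq_iff)
qed

lemma wr_mul_shift:
  assumes "u \<in> wr_carrier M L"
  shows "wr_mul M L u (d, \<lambda>_. dih_one) = ((fst u + d) mod M, snd u)"
  using wr_carrierD[OF assms] by (auto simp: wr_mul_def dih_mul_one_right)

lemma wr_inv_shift: "wr_inv M L (d, \<lambda>_. dih_one) = ((- d) mod M, \<lambda>_. dih_one)"
  by (auto simp: wr_inv_def dih_inv_def dih_one_def)

lemma wr_mul_point:
  assumes "u \<in> wr_carrier M L" "q mod M = q"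
  shows "wr_mul M L u (0, (\<lambda>_. dih_one)(q := c)) =
    (fst u, (snd u)((fst u + q) mod M := dih_mul L (snd u ((fst u + q) mod M)) c))"
proof -
  note u = wr_carrierD[OF assms(1)]
  have hit: "(x - fst u) mod M = q \<longleftrightarrow> x = (fst u + q) mod M" if "x mod M = x" for x
  proof -
    have "(x - fst u) mod M = q mod M \<longleftrightarrow> x mod M = (fst u + q) mod M"
      by (simp add: mod_eq_dvd_iff algebra_simps)
    then show ?thesis using that assms(2) by (metis mod_mod_trivial)
  qed
  have "snd (wr_mul M L u (0, (\<lambda>_. dih_one)(q := c))) x =
      ((snd u)((fst u + q) mod M := dih_mul L (snd u ((fst u + q) mod M)) c)) x" for x
    using hit[of x] u(2,3)[of x] by (auto simp: wr_mul_def dih_mul_one_right)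
  moreover have "fst (wr_mul M L u (0, (\<lambda>_. dih_one)(q := c))) = fst u"
    using u(1) by (simp add: wr_mul_def)
  ultimately show ?thesis by (simp add: prod_eq_iff ext)
qed

lemma wr_inv_point:
  "q mod M = q \<Longrightarrow> wr_inv M L (0, (\<lambda>_. dih_one)(q := c)) = (0, (\<lambda>_. dih_one)(q := dih_inv L c))"
  by (auto simp: wr_inv_def dih_inv_def dih_one_def)

lemma wr_mul_point_cancel:
  assumes "u \<in> wr_carrier M L" "u' \<in> wr_carrier M L" "q mod M = q"
    and eq: "wr_mul M L u (0, (\<lambda>_. dih_one)(q := c)) = wr_mul M L u' (0, (\<lambda>_. dih_one)(q := c))"
  shows "u = u'"
proof -
  note eq' = eq[unfolded wr_mul_point[OF assms(1,3)] wr_mul_point[OF assms(2,3)]]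
  have fst: "fst u = fst u'" using eq' by simp
  define p where "p = (fst u + q) mod M"
  have upd: "(snd u)(p := dih_mul L (snd u p) c) = (snd u')(p := dih_mul L (snd u' p) c)"
    using eq' fst unfolding p_def by simp
  have "snd u x = snd u' x" for x
  proof (cases "x = p")
    case True
    have "dih_mul L (snd u p) c = dih_mul L (snd u' p) c" using fun_cong[OF upd, of p] by simp
    then show ?thesis using True dih_mul_cancel_right wr_carrierD(2)[OF assms(1)]
        wr_carrierD(2)[OF assms(2)] by blast
  next
    case False
    then show ?thesis using fun_cong[OF upd, of x] by simp
  qed
  then show ?thesis using fst by (simp add: prod_eq_iff ext)
qed

definition tau_exponent :: "gen \<times> bool \<Rightarrow> int" where
  "tau_exponent x = (if fst x = Tau then (if snd x then -1 else 1) else 0)"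

definition tau_exponent_sum :: "(gen \<times> bool) list \<Rightarrow> int" where
  "tau_exponent_sum w = sum_list (map tau_exponent w)"

lemma abs_tau_exponent_sum_le: "\<bar>tau_exponent_sum w\<bar> \<le> int (length w)"
  by (induction w) (auto simp: tau_exponent_sum_def tau_exponent_def)

lemma abs_tau_exponent_sum_take:
  assumes "tau_exponent_sum w = 0"
  shows "2 * \<bar>tau_exponent_sum (take i w)\<bar> \<le> int (length w)"
proof -
  have "tau_exponent_sum (take i w) + tau_exponent_sum (drop i w) = tau_exponent_sum w"
    unfolding tau_exponent_sum_def by (metis append_take_drop_id map_append sum_list_append)
  then show ?thesis
    using assms abs_tau_exponent_sum_le[of "take i w"] abs_tau_exponent_sum_le[of "drop i w"]
    by (cases "i \<le> length w") auto
qed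

definition Gamma_letter :: "nat \<Rightarrow> enat \<Rightarrow> enat \<Rightarrow> gen \<times> bool \<Rightarrow> lamp" where
  "Gamma_letter k l m x =
    (if snd x then Gamma_inv l m (Gamma_gen k l m (fst x)) else Gamma_gen k l m (fst x))"

lemma Gamma_word_eq_foldl:
  "Gamma_word k l m w = foldl (\<lambda>g x. Gamma_mul l m g (Gamma_letter k l m x)) wr_one w"
  by (simp add: Gamma_word_def Gamma_letter_def)

lemma Gamma_letter_False [simp]: "Gamma_letter k l m (s, False) = Gamma_gen k l m s"
  by (simp add: Gamma_letter_def)

lemma Gamma_letter_involution: "s \<noteq> Tau \<Longrightarrow> Gamma_letter k l m (s, b) = Gamma_gen k l m s"
  by (cases s) (auto simp: Gamma_letter_def Gamma_inv_def Gamma_gen_def wr_inv_point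
      dih_inv_def dih_a_def dih_b_def)

lemma Gamma_letter_Tau:
  "Gamma_letter k l m (Tau, b) = (tau_exponent (Tau, b) mod emod m, \<lambda>_. dih_one)"
  by (auto simp: Gamma_letter_def Gamma_inv_def Gamma_gen_def wr_inv_shift tau_exponent_def
      mod_minus_eq)

lemma fst_Gamma_letter: "fst (Gamma_letter k l m x) = tau_exponent x mod emod m"
  by (cases x; cases "fst x")
    (auto simp: Gamma_letter_Tau Gamma_letter_involution tau_exponent_def Gamma_gen_def)

lemma fst_Gamma_word: "fst (Gamma_word k l m w) = tau_exponent_sum w mod emod m"
proof -
  have "fst (foldl (\<lambda>g x. Gamma_mul l m g (Gamma_letter k l m x)) u w)
      = (fst u + tau_exponent_sum w) mod emod m" if "fst u mod emod m = fst u" for u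
    using that
  proof (induction w arbitrary: u)
    case (Cons x w)
    let ?u = "Gamma_mul l m u (Gamma_letter k l m x)"
    have "fst ?u = (fst u + tau_exponent x) mod emod m"
      by (simp add: Gamma_mul_def wr_mul_def fst_Gamma_letter mod_add_right_eq)
    then show ?case
      using Cons.IH[of ?u] by (simp add: tau_exponent_sum_def mod_add_left_eq add.assoc)
  qed (simp add: tau_exponent_sum_def)
  then show ?thesis by (simp add: Gamma_word_eq_foldl wr_one_def)
qed

lemma Gamma_mul_gen_cancel:
  assumes u: "u \<in> Gamma_carrier l m" and u': "u' \<in> Gamma_carrier l m"
    and eq: "Gamma_mul l m u (Gamma_gen k l m s) = Gamma_mul l m u' (Gamma_gen k l m s)"
  shows "u = u'"
proof (cases s)
  case Tau
  have "fst u mod emod m = fst u' mod emod m" "snd u = snd u'"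
    using eq u u' Tau
    by (auto simp: Gamma_mul_def Gamma_gen_def Gamma_carrier_def wr_mul_shift mod_eq_dvd_iff)
  then show ?thesis
    using wr_carrierD(1) u u' by (metis Gamma_carrier_def prod_eq_iff)
next
  case Alpha
  then show ?thesis using eq wr_mul_point_cancel[of u _ _ u' 0] u u'
    by (simp add: Gamma_mul_def Gamma_gen_def Gamma_carrier_def)
next
  case Beta
  then show ?thesis using eq wr_mul_point_cancel[of u _ _ u' "int k mod emod m"] u u'
    by (simp add: Gamma_mul_def Gamma_gen_def Gamma_carrier_def)
qed

section \<open>The model graph\<close>

definition window :: "nat \<Rightarrow> int set" where
  "window K = {j. 2 * \<bar>j\<bar> < int K}"

lemma finite_window: "finite (window K)"
  by (rule finite_subset[of _ "{- int K..int K}"]) (auto simp: window_def)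

definition toggle :: "'a set \<Rightarrow> 'a \<Rightarrow> 'a set" where
  "toggle A x = (if x \<in> A then A - {x} else insert x A)"

lemma toggle_toggle [simp]: "toggle (toggle A x) x = A"
  by (auto simp: toggle_def)

lemma toggle_subset: "A \<subseteq> W \<Longrightarrow> x \<in> W \<Longrightarrow> toggle A x \<subseteq> W"
  by (auto simp: toggle_def)

lemma image_toggle:
  "(\<And>y. y \<in> A \<Longrightarrow> f y = f x \<Longrightarrow> y = x) \<Longrightarrow> f ` toggle A x = toggle (f ` A) (f x)"
  by (auto simp: toggle_def)

datatype state = State (pos: int) (a_marks: "int set") (b_marks: "int set")

definition state0 :: state where
  "state0 = State 0 {} {}"

definition step :: "gen \<times> bool \<Rightarrow> state \<Rightarrow> state" where
  "step x t = (case fst x of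
      Tau \<Rightarrow> State (pos t + tau_exponent x) (a_marks t) (b_marks t)
    | Alpha \<Rightarrow> State (pos t) (toggle (a_marks t) (pos t)) (b_marks t)
    | Beta \<Rightarrow> State (pos t) (a_marks t) (toggle (b_marks t) (pos t)))"

lemma pos_step [simp]: "pos (step x t) = pos t + tau_exponent x"
  by (cases "fst x") (auto simp: step_def tau_exponent_def)

lemma step_inverse: "step (s, False) (step (s, True) t) = t"
  by (cases s) (auto simp: step_def tau_exponent_def)

definition marks_in :: "nat \<Rightarrow> state \<Rightarrow> bool" where
  "marks_in K t \<longleftrightarrow> a_marks t \<subseteq> window K \<and> b_marks t \<subseteq> window K"

definition valid :: "nat \<Rightarrow> state \<Rightarrow> bool" where
  "valid K t \<longleftrightarrow> pos t \<in> window K \<and> marks_in K t"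

lemma marks_in_finite: "marks_in K t \<Longrightarrow> finite (a_marks t) \<and> finite (b_marks t)"
  using finite_window by (auto simp: marks_in_def intro: finite_subset)

lemma marks_in_step: "valid K t \<Longrightarrow> marks_in K (step x t)"
  by (cases "fst x") (auto simp: valid_def marks_in_def step_def toggle_subset)

lemma pos_step_bound: "valid K t \<Longrightarrow> 2 * \<bar>pos (step x t)\<bar> \<le> int K + 1"
  by (auto simp: valid_def window_def tau_exponent_def abs_if split: if_splits)

lemma valid_state0_iff: "valid K state0 \<longleftrightarrow> 0 < K"
  by (simp add: valid_def marks_in_def window_def state0_def)

definition model_adj :: "nat \<Rightarrow> (state \<times> state) set" where
  "model_adj K = {(t, t'). valid K t \<and> valid K t' \<and>
      (\<exists>s. t' = step (s, False) t \<or> t = step (s, False) t')}"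

definition reachable :: "nat \<Rightarrow> state set" where
  "reachable K = {t. valid K t \<and> (state0, t) \<in> (model_adj K)\<^sup>*}"

lemma state0_reachable_iff: "state0 \<in> reachable K \<longleftrightarrow> 0 < K"
  by (simp add: reachable_def valid_state0_iff)

lemma reachable_closed:
  "t \<in> reachable K \<Longrightarrow> (t, u) \<in> model_adj K \<Longrightarrow> u \<in> reachable K"
  by (auto simp: reachable_def model_adj_def intro: rtrancl_into_rtrancl)

definition run :: "(gen \<times> bool) list \<Rightarrow> state \<Rightarrow> state" where
  "run w t = foldl (\<lambda>t x. step x t) t w"

lemma pos_run: "pos (run w t) = pos t + tau_exponent_sum w"
  by (induction w arbitrary: t) (auto simp: run_def tau_exponent_sum_def)

lemma marks_in_run:
  "marks_in K t \<Longrightarrow> (\<forall>i<length w. pos (run (take i w) t) \<in> window K) \<Longrightarrow> marks_in K (run w t)"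
proof (induction w arbitrary: t)
  case (Cons x w)
  have "valid K t" using Cons.prems by (auto simp: valid_def run_def)
  moreover have "\<forall>i<length w. pos (run (take i w) (step x t)) \<in> window K"
    using Cons.prems(2) by (auto simp: run_def)
  ultimately show ?case using Cons.IH marks_in_step by (simp add: run_def)
qed (simp add: run_def)

section \<open>Encoding model states into a band\<close>

lemma emod_nonneg: "emod m \<ge> 0"
  by (simp add: emod_def split: enat.split)

lemma mod_add_right_cancel:
  fixes a b c M :: int
  shows "(a + c) mod M = (b + c) mod M \<longleftrightarrow> a mod M = b mod M"
  by (simp add: mod_eq_dvd_iff)

text \<open>Unless \<open>D\<^sub>l = D\<^sub>2\<close> is abelian, \<open>\<alpha>\<close>- and \<open>\<beta>\<close>-lamps lit from window positions must
  live at different sites, since there the two kinds of lamp do not commute.\<close>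

locale band_model =
  fixes K kg :: nat and l m :: enat
  assumes window_dvd: "\<And>d. \<bar>d\<bar> \<le> int K \<Longrightarrow> emod m dvd d \<Longrightarrow> d = 0"
    and emod_l_neq_1: "emod l \<noteq> 1"
    and sites_disjoint:
      "emod l = 2 \<or> (\<forall>j \<in> window K. \<forall>j' \<in> window K. \<not> emod m dvd j - j' - int kg)"
begin

abbreviation M :: int where "M \<equiv> emod m"
abbreviation L :: int where "L \<equiv> emod l"

definition a_sites :: "state \<Rightarrow> int set" where
  "a_sites t = (\<lambda>j. j mod M) ` a_marks t"

definition b_sites :: "state \<Rightarrow> int set" where
  "b_sites t = (\<lambda>j. (j + int kg) mod M) ` b_marks t"

text \<open>With \<open>\<alpha>, \<beta> \<in> {0, 1}\<close> indicating membership in the \<open>\<alpha>\<close>- and \<open>\<beta>\<close>-sites, the lamp at a site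
  is \<open>b\<^sup>\<beta> a\<^sup>\<alpha> = \<rho>\<^sup>\<beta> \<sigma>\<^sup>\<alpha>\<^sup>+\<^sup>\<beta>\<close>.\<close>

definition lamps :: "state \<Rightarrow> int \<Rightarrow> dih" where
  "lamps t x = (if x mod M = x then
      (if x \<in> b_sites t then 1 mod L else 0, (x \<in> a_sites t) \<noteq> (x \<in> b_sites t)) else dih_one)"

definition enc :: "state \<Rightarrow> lamp" where
  "enc t = (pos t mod M, lamps t)"

lemma mod_eq_imp_eq: "\<bar>a\<bar> + \<bar>b\<bar> \<le> int K \<Longrightarrow> a mod M = b mod M \<Longrightarrow> a = b"
  using window_dvd[of "a - b"] by (simp add: mod_eq_dvd_iff)

lemma one_mod_L: "1 mod L \<noteq> 0"
  using emod_l_neq_1 emod_nonneg[of l] by (cases "L = 0") auto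

lemma zabs_mod:
  assumes "2 * \<bar>n\<bar> \<le> int K + 1"
  shows "zabs M (n mod M) = \<bar>n\<bar>"
proof (cases "M = 0")
  case False
  then have "int K < M" using window_dvd[of M] emod_nonneg[of m] by fastforce
  then have "2 * \<bar>n\<bar> \<le> M" using assms by linarith
  then show ?thesis
  proof (cases "0 \<le> n")
    case False
    then have "(n + M) mod M = n + M"
      using \<open>2 * \<bar>n\<bar> \<le> M\<close> \<open>int K < M\<close> by (intro mod_pos_pos_trivial) linarith+
    then have "n mod M = n + M" by simp
    then show ?thesis using False \<open>2 * \<bar>n\<bar> \<le> M\<close> by (simp add: zabs_def)
  qed (simp add: zabs_def)
qed (simp add: zabs_def)

lemma enc_state0: "enc state0 = wr_one"
  by (auto simp: enc_def state0_def wr_one_def lamps_def a_sites_def b_sites_def dih_one_def)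

lemma enc_carrier:
  assumes "marks_in K t"
  shows "enc t \<in> Gamma_carrier l m"
proof -
  have "{x. lamps t x \<noteq> dih_one} \<subseteq> a_sites t \<union> b_sites t"
    by (auto simp: lamps_def dih_one_def)
  then have "finite {x. lamps t x \<noteq> dih_one}"
    using marks_in_finite[OF assms] by (auto simp: a_sites_def b_sites_def intro: finite_subset)
  then show ?thesis
    by (auto simp: Gamma_carrier_def wr_carrier_def enc_def lamps_def dih_one_def)
qed

lemma window_mod_inj: "j \<in> window K \<Longrightarrow> j' \<in> window K \<Longrightarrow> j mod M = j' mod M \<Longrightarrow> j = j'"
  using mod_eq_imp_eq by (simp add: window_def)

lemma mem_a_sites_iff:
  assumes "marks_in K t" "j \<in> window K"
  shows "j mod M \<in> a_sites t \<longleftrightarrow> j \<in> a_marks t"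
  using assms window_mod_inj by (auto simp: a_sites_def marks_in_def)

lemma mem_b_sites_iff:
  assumes "marks_in K t" "j \<in> window K"
  shows "(j + int kg) mod M \<in> b_sites t \<longleftrightarrow> j \<in> b_marks t"
  using assms window_mod_inj by (auto simp: b_sites_def marks_in_def mod_add_right_cancel) blast

lemma enc_inj:
  assumes t: "marks_in K t" and t': "marks_in K t'"
    and pos: "\<bar>pos t\<bar> + \<bar>pos t'\<bar> \<le> int K" and eq: "enc t = enc t'"
  shows "t = t'"
proof -
  have sites: "(x \<in> a_sites t \<longleftrightarrow> x \<in> a_sites t') \<and> (x \<in> b_sites t \<longleftrightarrow> x \<in> b_sites t')"
    if "x mod M = x" for x
    using fun_cong[OF eq[THEN arg_cong[where f = snd]], of x] that one_mod_L
    by (auto simp: enc_def lamps_def split: if_splits)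
  have "a_marks t = a_marks t'"
  proof (rule set_eqI)
    fix j
    show "j \<in> a_marks t \<longleftrightarrow> j \<in> a_marks t'"
      using t t' sites[of "j mod M"] mem_a_sites_iff[OF t] mem_a_sites_iff[OF t']
      by (cases "j \<in> window K") (auto simp: marks_in_def)
  qed
  moreover have "b_marks t = b_marks t'"
  proof (rule set_eqI)
    fix j
    show "j \<in> b_marks t \<longleftrightarrow> j \<in> b_marks t'"
      using t t' sites[of "(j + int kg) mod M"] mem_b_sites_iff[OF t] mem_b_sites_iff[OF t']
      by (cases "j \<in> window K") (auto simp: marks_in_def)
  qed
  moreover have "pos t = pos t'"
    using eq pos mod_eq_imp_eq by (simp add: enc_def)
  ultimately show ?thesis by (cases t; cases t') simp
qed

lemma a_sites_step_Alpha:
  assumes "valid K t"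
  shows "a_sites (step (Alpha, b) t) = toggle (a_sites t) (pos t mod M)"
proof -
  have "a_marks (step (Alpha, b) t) = toggle (a_marks t) (pos t)" by (simp add: step_def)
  then show ?thesis
    unfolding a_sites_def using assms window_mod_inj
    by (metis (no_types, lifting) image_toggle marks_in_def subsetD valid_def)
qed

lemma b_sites_step_Beta:
  assumes "valid K t"
  shows "b_sites (step (Beta, b) t) = toggle (b_sites t) ((pos t + int kg) mod M)"
proof -
  have "b_marks (step (Beta, b) t) = toggle (b_marks t) (pos t)" by (simp add: step_def)
  moreover have "y = pos t" if "y \<in> b_marks t" "(y + int kg) mod M = (pos t + int kg) mod M" for y
    using that assms window_mod_inj[of y "pos t"]
    by (auto simp: valid_def marks_in_def mod_add_right_cancel)
  ultimately show ?thesis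
    unfolding b_sites_def by (simp add: image_toggle)
qed

lemma enc_mul_Alpha:
  assumes "valid K t"
  shows "Gamma_mul l m (enc t) (Gamma_gen kg l m Alpha) = enc (step (Alpha, b) t)"
proof -
  let ?p = "pos t mod M"
  have "lamps (step (Alpha, b) t) = (lamps t)(?p := dih_mul L (lamps t ?p) dih_a)"
    using a_sites_step_Alpha[OF assms]
    by (auto simp: lamps_def b_sites_def step_def toggle_def dih_mul_def dih_a_def)
  then show ?thesis
    using wr_mul_point[of "enc t" M L 0 dih_a] enc_carrier assms
    by (simp add: Gamma_mul_def Gamma_gen_def Gamma_carrier_def enc_def valid_def step_def)
qed

lemma enc_mul_Beta:
  assumes "valid K t"
  shows "Gamma_mul l m (enc t) (Gamma_gen kg l m Beta) = enc (step (Beta, b) t)"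
proof -
  let ?p = "(pos t + int kg) mod M"
  have "L = 2 \<or> ?p \<notin> a_sites t"
  proof (cases "L = 2")
    case False
    then have "j mod M \<noteq> ?p" if "j \<in> a_marks t" for j
      using sites_disjoint assms that by (auto simp: valid_def marks_in_def mod_eq_dvd_iff diff_diff_eq)
    then have "?p \<notin> a_sites t" unfolding a_sites_def by (metis (no_types, lifting) imageE)
    then show ?thesis ..
  qed simp
  then have "lamps (step (Beta, b) t) = (lamps t)(?p := dih_mul L (lamps t ?p) (dih_b L))"
    using b_sites_step_Beta[OF assms]
    by (auto simp: lamps_def a_sites_def step_def toggle_def dih_mul_def dih_b_def)
  moreover have "(pos t mod M + int kg mod M) mod M = ?p"
    by (simp add: mod_add_eq)
  ultimately show ?thesis
    using wr_mul_point[of "enc t" M L "int kg mod M" "dih_b L"] enc_carrier assms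
    by (simp add: Gamma_mul_def Gamma_gen_def Gamma_carrier_def enc_def valid_def step_def)
qed

lemma enc_mul_Tau:
  assumes "marks_in K t"
  shows "Gamma_mul l m (enc t) (Gamma_letter kg l m (Tau, b)) = enc (step (Tau, b) t)"
  using wr_mul_shift enc_carrier[OF assms]
  by (simp add: Gamma_mul_def Gamma_letter_Tau Gamma_carrier_def enc_def step_def fun_eq_iff
      lamps_def a_sites_def b_sites_def mod_add_eq)

lemma enc_mul_letter:
  assumes "valid K t"
  shows "Gamma_mul l m (enc t) (Gamma_letter kg l m x) = enc (step x t)"
  using assms enc_mul_Alpha enc_mul_Beta enc_mul_Tau
  by (cases x; cases "fst x") (auto simp: Gamma_letter_involution valid_def)

lemma enc_in_band_iff:
  assumes "marks_in K t" "2 * \<bar>pos t\<bar> \<le> int K + 1"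
  shows "enc t \<in> band K l m \<longleftrightarrow> 2 * \<bar>pos t\<bar> < int K"
  using enc_carrier[OF assms(1)] zabs_mod[OF assms(2)] by (simp add: band_def enc_def)

lemma valid_iff_enc_in_band:
  assumes "marks_in K t" "2 * \<bar>pos t\<bar> \<le> int K + 1"
  shows "valid K t \<longleftrightarrow> enc t \<in> band K l m"
  using enc_in_band_iff[OF assms] assms(1) by (simp add: valid_def window_def)

lemma valid_step_iff_enc_in_band:
  "valid K t \<Longrightarrow> valid K (step x t) \<longleftrightarrow> enc (step x t) \<in> band K l m"
  using valid_iff_enc_in_band marks_in_step pos_step_bound by blast

lemma wr_one_in_band_iff: "wr_one \<in> band K l m \<longleftrightarrow> 0 < K"
proof -
  have "marks_in K state0" "pos state0 = 0" by (simp_all add: state0_def marks_in_def)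
  then show ?thesis using valid_iff_enc_in_band[of state0] valid_state0_iff enc_state0 by simp
qed

lemma enc_mul_gen_step_inverse:
  assumes "valid K t"
  shows "Gamma_mul l m (enc (step (s, True) t)) (Gamma_gen kg l m s) = enc t"
proof (cases "s = Tau")
  case True
  then show ?thesis
    using enc_mul_Tau[OF marks_in_step[OF assms], where b = False] step_inverse[of Tau t] by simp
next
  case False
  then have "valid K (step (s, True) t)"
    using assms marks_in_step by (auto simp: valid_def tau_exponent_def)
  then show ?thesis
    using enc_mul_letter[of "step (s, True) t" "(s, False)"] step_inverse[of s t] by simp
qed

lemma enc_in_band:
  assumes "valid K t"
  shows "enc t \<in> band K l m"
proof -
  have "2 * \<bar>pos t\<bar> \<le> int K + 1" using assms by (simp add: valid_def window_def)
  then show ?thesis using valid_iff_enc_in_band[of t] assms by (simp add: valid_def)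
qed

lemma enc_edge:
  assumes "(t, t') \<in> model_adj K"
  shows "(enc t, enc t') \<in> band_adj K kg l m"
proof -
  from assms obtain s where v: "valid K t" "valid K t'"
    and "t' = step (s, False) t \<or> t = step (s, False) t'"
    by (auto simp: model_adj_def)
  then have "enc t' = Gamma_mul l m (enc t) (Gamma_gen kg l m s)
      \<or> enc t = Gamma_mul l m (enc t') (Gamma_gen kg l m s)"
    using enc_mul_letter[OF v(1), of "(s, False)"] enc_mul_letter[OF v(2), of "(s, False)"] by auto
  then show ?thesis using enc_in_band[OF v(1)] enc_in_band[OF v(2)] by (auto simp: band_adj_def)
qed

lemma band_adj_from_reachable:
  assumes t: "t \<in> reachable K" and edge: "(enc t, z) \<in> band_adj K kg l m"
  shows "z \<in> enc ` reachable K"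
proof -
  have vt: "valid K t" using t by (simp add: reachable_def)
  from edge obtain s where z: "z \<in> band K l m"
    and "z = Gamma_mul l m (enc t) (Gamma_gen kg l m s) \<or> enc t = Gamma_mul l m z (Gamma_gen kg l m s)"
    by (auto simp: band_adj_def)
  then consider "z = enc (step (s, False) t)" | "enc t = Gamma_mul l m z (Gamma_gen kg l m s)"
    using enc_mul_letter[OF vt, of "(s, False)"] by auto
  then obtain u where "z = enc u" "(t, u) \<in> model_adj K"
  proof cases
    case 1
    then show ?thesis
      using that valid_step_iff_enc_in_band[OF vt] vt z by (auto simp: model_adj_def)
  next
    case 2
    let ?u = "step (s, True) t"
    have "z = enc ?u"
    proof (rule Gamma_mul_gen_cancel)
      show "z \<in> Gamma_carrier l m" using z by (simp add: band_def)
      show "enc ?u \<in> Gamma_carrier l m" using enc_carrier marks_in_step[OF vt] .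
      show "Gamma_mul l m z (Gamma_gen kg l m s) = Gamma_mul l m (enc ?u) (Gamma_gen kg l m s)"
        using 2 enc_mul_gen_step_inverse[OF vt] by simp
    qed
    moreover have "valid K ?u" using valid_step_iff_enc_in_band[OF vt] z \<open>z = enc ?u\<close> by simp
    then have "(t, ?u) \<in> model_adj K"
      unfolding model_adj_def using vt step_inverse[of s t] by (auto intro!: exI[of _ s])
    ultimately show ?thesis using that by blast
  qed
  then show ?thesis using reachable_closed[OF t] by blast
qed

lemma ident_comp_eq_image: "ident_comp K kg l m = enc ` reachable K"
proof (intro equalityI subsetI)
  fix h assume "h \<in> ident_comp K kg l m"
  then have "(wr_one, h) \<in> (band_adj K kg l m)\<^sup>*" "h \<in> band K l m"
    by (auto simp: ident_comp_def)
  then show "h \<in> enc ` reachable K"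
  proof (induction rule: rtrancl_induct)
    case base
    then have "state0 \<in> reachable K"
      using wr_one_in_band_iff valid_state0_iff by (simp add: reachable_def)
    then show ?case using enc_state0 by force
  next
    case (step y z)
    then have "y \<in> enc ` reachable K" by (auto simp: band_adj_def)
    then show ?case using step.hyps(2) band_adj_from_reachable by blast
  qed
next
  fix h assume "h \<in> enc ` reachable K"
  then obtain t where t: "h = enc t" "valid K t" "(state0, t) \<in> (model_adj K)\<^sup>*"
    by (auto simp: reachable_def)
  from t(3) have "(enc state0, enc t) \<in> (band_adj K kg l m)\<^sup>*"
    by (induction rule: rtrancl_induct) (auto intro: rtrancl_into_rtrancl enc_edge)
  then show "h \<in> ident_comp K kg l m"
    using t enc_in_band by (auto simp: ident_comp_def enc_state0)
qed

lemma wr_one_in_ident_comp_iff: "wr_one \<in> ident_comp K kg l m \<longleftrightarrow> 0 < K"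
  by (simp add: ident_comp_def wr_one_in_band_iff)

lemma inj_on_enc_reachable: "inj_on enc (reachable K)"
  by (rule inj_onI, rule enc_inj) (auto simp: reachable_def valid_def window_def)

lemma enc_edge_iff:
  assumes "t \<in> reachable K" "t' \<in> reachable K"
  shows "enc t' = Gamma_mul l m (enc t) (Gamma_gen kg l m s) \<longleftrightarrow> t' = step (s, False) t"
proof -
  have v: "valid K t" "valid K t'" using assms by (auto simp: reachable_def)
  then have "\<bar>pos t'\<bar> + \<bar>pos (step (s, False) t)\<bar> \<le> int K"
    using pos_step_bound[OF v(1), of "(s, False)"] by (simp add: valid_def window_def)
  then show ?thesis
    using enc_mul_letter[OF v(1), of "(s, False)"] enc_inj[of t' "step (s, False) t"]
      marks_in_step[OF v(1)] v(2) by (auto simp: valid_def)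
qed

lemma enc_run:
  assumes "marks_in K t" "\<forall>i<length w. pos (run (take i w) t) \<in> window K"
  shows "foldl (\<lambda>g x. Gamma_mul l m g (Gamma_letter kg l m x)) (enc t) w = enc (run w t)"
  using assms
proof (induction w arbitrary: t)
  case (Cons x w)
  have "valid K t" using Cons.prems by (auto simp: valid_def run_def)
  moreover have "\<forall>i<length w. pos (run (take i w) (step x t)) \<in> window K"
    using Cons.prems(2) by (auto simp: run_def)
  ultimately show ?case
    using Cons.IH[of "step x t"] marks_in_step enc_mul_letter by (simp add: run_def)
qed (simp add: run_def)

lemma Gamma_word_eq_one_iff:
  assumes "length w < K"
  shows "Gamma_word kg l m w = wr_one \<longleftrightarrow> run w state0 = state0"
proof (cases "tau_exponent_sum w = 0")
  case True
  have "pos state0 = 0" "marks_in K state0" by (simp_all add: state0_def marks_in_def)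
  moreover have "\<forall>i<length w. pos (run (take i w) state0) \<in> window K"
  proof (intro allI impI)
    fix i
    have "int (length w) < int K" using assms by simp
    then have "2 * \<bar>tau_exponent_sum (take i w)\<bar> < int K"
      using abs_tau_exponent_sum_take[OF True, of i] by linarith
    then show "pos (run (take i w) state0) \<in> window K"
      by (simp add: pos_run window_def \<open>pos state0 = 0\<close>)
  qed
  ultimately have "Gamma_word kg l m w = enc (run w state0)" "marks_in K (run w state0)"
    using enc_run[of state0 w] marks_in_run by (auto simp: Gamma_word_eq_foldl enc_state0)
  moreover have "pos (run w state0) = 0" using True \<open>pos state0 = 0\<close> by (simp add: pos_run)
  ultimately show ?thesis
    using enc_inj[of "run w state0" state0] enc_state0 \<open>pos state0 = 0\<close> \<open>marks_in K state0\<close>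
    by auto
next
  case False
  then have "\<not> M dvd tau_exponent_sum w"
    using window_dvd abs_tau_exponent_sum_le[of w] assms by force
  then have "Gamma_word kg l m w \<noteq> wr_one"
    by (metis dvd_eq_mod_eq_0 fst_Gamma_word fst_conv wr_one_def)
  moreover have "run w state0 \<noteq> state0"
    using False pos_run[of w state0] by (auto simp: state0_def)
  ultimately show ?thesis by simp
qed

end

lemma band_model_Gamma:
  assumes "l \<ge> 2" "2 * enat k < m"
  shows "band_model k k l m"
proof
  show "emod l \<noteq> 1"
    using assms(1) by (cases l) (auto simp: emod_def numeral_eq_enat)
  show "d = 0" if "\<bar>d\<bar> \<le> int k" "emod m dvd d" for d
  proof (cases m)
    case (enat n)
    then have "int k < int n" using assms(2) by (simp add: numeral_eq_enat)
    then show ?thesis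
      using that enat dvd_imp_le_int[of d "int n"] by (auto simp: emod_def)
  qed (use that in \<open>simp add: emod_def\<close>)
  show "emod l = 2 \<or> (\<forall>j \<in> window k. \<forall>j' \<in> window k. \<not> emod m dvd j - j' - int k)"
  proof (intro disjI2 ballI notI)
    fix j j' assume j: "j \<in> window k" "j' \<in> window k" and dvd: "emod m dvd j - j' - int k"
    have bounds: "j - j' - int k \<noteq> 0" "\<bar>j - j' - int k\<bar> < 2 * int k"
      using j by (auto simp: window_def)
    show False
    proof (cases m)
      case (enat n)
      then have "2 * int k < int n" using assms(2) by (simp add: numeral_eq_enat)
      then show False
        using dvd enat bounds dvd_imp_le_int[of "j - j' - int k" "int n"] by (simp add: emod_def)
    qed (use dvd bounds in \<open>simp add: emod_def\<close>)
  qed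
qed

lemma band_model_lamplighter: "band_model K 0 2 \<infinity>"
  by unfold_locales (auto simp: emod_def numeral_eq_enat)

lemma ex_bij_betw_transfer:
  assumes "inj_on f R" "inj_on g R"
  shows "\<exists>\<phi>. bij_betw \<phi> (f ` R) (g ` R) \<and> (\<forall>t \<in> R. \<phi> (f t) = g t) \<and> (\<forall>u. u \<notin> f ` R \<longrightarrow> \<phi> u = y)"
proof -
  define \<phi> where "\<phi> u = (if u \<in> f ` R then g (the_inv_into R f u) else y)" for u
  have "\<phi> (f t) = g t" if "t \<in> R" for t
    using that assms(1) by (simp add: \<phi>_def the_inv_into_f_f)
  moreover from this have "bij_betw \<phi> (f ` R) (g ` R)"
    using assms by (auto simp: bij_betw_def inj_on_def image_image intro!: image_cong)
  ultimately show ?thesis by (auto simp: \<phi>_def)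
qed

theorem lemma2p2:
  fixes k :: nat and l m :: enat
  assumes "l \<ge> 2" and "m \<ge> 1" and "2 * enat k < m"
  shows "(\<exists>\<phi>. bij_betw \<phi> (ident_comp k k l m) (ident_comp k 0 2 \<infinity>)
            \<and> \<phi> wr_one = wr_one
            \<and> (\<forall>u \<in> ident_comp k k l m. \<forall>v \<in> ident_comp k k l m. \<forall>s.
                 v = Gamma_mul l m u (Gamma_gen k l m s)
                 \<longleftrightarrow> \<phi> v = Gamma_mul 2 \<infinity> (\<phi> u) (Gamma_gen 0 2 \<infinity> s)))
       \<and> (\<forall>w :: (gen \<times> bool) list. int (length w) \<le> int k - 1 \<longrightarrow>
            (Gamma_word k l m w = wr_one \<longleftrightarrow> Gamma_word 0 2 \<infinity> w = wr_one))"
proof -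
  interpret G: band_model k k l m using band_model_Gamma assms(1,3) .
  interpret Z: band_model k 0 2 \<infinity> by (rule band_model_lamplighter)
  obtain \<phi> where bij: "bij_betw \<phi> (G.enc ` reachable k) (Z.enc ` reachable k)"
    and \<phi>: "\<forall>t \<in> reachable k. \<phi> (G.enc t) = Z.enc t"
    and default: "\<forall>u. u \<notin> G.enc ` reachable k \<longrightarrow> \<phi> u = wr_one"
    using ex_bij_betw_transfer[OF G.inj_on_enc_reachable Z.inj_on_enc_reachable] by blast
  have one: "\<phi> wr_one = wr_one"
  proof (cases "0 < k")
    case True
    then show ?thesis using \<phi> state0_reachable_iff G.enc_state0 Z.enc_state0 by metis
  next
    case False
    then have "wr_one \<notin> G.enc ` reachable k"
      using G.wr_one_in_ident_comp_iff G.ident_comp_eq_image by simp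
    then show ?thesis using default by blast
  qed
  have edges: "v = Gamma_mul l m u (Gamma_gen k l m s)
      \<longleftrightarrow> \<phi> v = Gamma_mul 2 \<infinity> (\<phi> u) (Gamma_gen 0 2 \<infinity> s)"
    if "u \<in> G.enc ` reachable k" "v \<in> G.enc ` reachable k" for u v s
    using that \<phi> G.enc_edge_iff Z.enc_edge_iff by auto
  show ?thesis
    unfolding G.ident_comp_eq_image Z.ident_comp_eq_image
    using bij one edges G.Gamma_word_eq_one_iff Z.Gamma_word_eq_one_iff
    by (intro conjI exI[of _ \<phi>]) (auto simp: of_nat_diff)
qed

end
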